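(* Let $\varphi:\mathbb{R}^n\to\mathbb{R}$ be of class $\mathcal C^{1,1}$ around its tilt-stable local minimizer $\bar x$. Then there is a neighborhood $O$ of $\bar x$ such that the set $\Upsilon(x):=\{y\in\mathbb{R}^n: -\nabla\varphi(x)\in D\nabla\varphi(x)(y)\}$ is nonempty and compact for all $x\in O$.
   Context: $\mathcal C^{1,1}$ near $\bar x$: differentiable with locally Lipschitz gradient near $\bar x$. Tangent cone $T_\Omega(\bar x)=\{w:\exists t_k\downarrow0,w_k\to w,\bar x+t_kw_k\in\Omega\}$; graphical derivative of single-valued $f$: $Df(x)(u)=\{w:(u,w)\in T_{\operatorname{gph}f}(x,f(x))\}$. $\bar x$ is a tilt-stable local minimizer of $\varphi$ if for some $\gamma>0$ the mapping $M_\gamma(v)=\operatorname{argmin}\{\varphi(x)-\langle v,x\rangle:x\in\mathbb B_\gamma(\bar x)\}$ is single-valued and Lipschitz continuous on a neighborhood of $0$, with $M_\gamma(0)=\{\bar x\}$. *)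

theory Defs
  imports "HOL-Analysis.Analysis"
begin

definition grad :: "('a::euclidean_space \<Rightarrow> real) \<Rightarrow> 'a \<Rightarrow> 'a" where
  "grad f x = (\<Sum>b\<in>Basis. frechet_derivative f (at x) b *\<^sub>R b)"

definition C11_near :: "('a::euclidean_space \<Rightarrow> real) \<Rightarrow> 'a \<Rightarrow> bool" where
  "C11_near f xbar \<longleftrightarrow> (\<exists>U. open U \<and> xbar \<in> U \<and>
     (\<forall>x\<in>U. f differentiable (at x)) \<and>
     (\<forall>x\<in>U. \<exists>r>0. \<exists>L. L-lipschitz_on (ball x r \<inter> U) (grad f)))"

definition tangent_cone :: "'a::real_normed_vector set \<Rightarrow> 'a \<Rightarrow> 'a set" where
  "tangent_cone \<Omega> x = {w. \<exists>t ws. (\<forall>k. t k > 0) \<and> t \<longlonglongrightarrow> 0 \<and> ws \<longlonglongrightarrow> w \<and>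
                              (\<forall>k. x + t k *\<^sub>R ws k \<in> \<Omega>)}"

definition graph_of :: "('a \<Rightarrow> 'b) \<Rightarrow> ('a \<times> 'b) set" where
  "graph_of f = {(x, f x) | x. True}"

definition graph_deriv :: "('a::real_normed_vector \<Rightarrow> 'b::real_normed_vector) \<Rightarrow> 'a \<Rightarrow> 'a \<Rightarrow> 'b set" where
  "graph_deriv f x u = {w. (u, w) \<in> tangent_cone (graph_of f) (x, f x)}"

definition tilt_argmin :: "('a::euclidean_space \<Rightarrow> real) \<Rightarrow> 'a \<Rightarrow> real \<Rightarrow> 'a \<Rightarrow> 'a set" where
  "tilt_argmin \<phi> xbar \<gamma> v = {x \<in> cball xbar \<gamma>. \<forall>y\<in>cball xbar \<gamma>. \<phi> x - v \<bullet> x \<le> \<phi> y - v \<bullet> y}"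

definition tilt_stable_min :: "('a::euclidean_space \<Rightarrow> real) \<Rightarrow> 'a \<Rightarrow> bool" where
  "tilt_stable_min \<phi> xbar \<longleftrightarrow> (\<exists>\<gamma>>0. \<exists>V m L. open V \<and> 0 \<in> V \<and>
      (\<forall>v\<in>V. tilt_argmin \<phi> xbar \<gamma> v = {m v}) \<and> L-lipschitz_on V m \<and>
      tilt_argmin \<phi> xbar \<gamma> 0 = {xbar})"

end

theory Submission
  imports Defs
begin

text \<open>Tilt stability makes the tilt-argmin map \<open>m\<close> a Lipschitz inverse of \<open>\<nabla>\<phi>\<close> near
  \<open>xbar\<close>: a minimizer of \<open>\<phi> - \<langle>v, \<cdot>\<rangle>\<close> lying in the interior of the ball satisfies
  \<open>\<nabla>\<phi> = v\<close>, and by invariance of domain the image of \<open>m\<close> is an open neighborhood \<open>N\<close> of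
  \<open>xbar\<close>. For \<open>x \<in> N\<close>, Lipschitz continuity of \<open>m\<close> gives \<open>\<parallel>y\<parallel> \<le> L \<parallel>w\<parallel>\<close> whenever
  \<open>w \<in> D\<nabla>\<phi>(x)(y)\<close>, so \<open>\<Upsilon>(x)\<close> is bounded; it is closed as a section of a tangent cone.
  Conversely the difference quotients \<open>(m(\<nabla>\<phi>(x) + t w) - x)/t\<close> are bounded by \<open>L \<parallel>w\<parallel>\<close>,
  and any cluster point \<open>y\<close> as \<open>t \<down> 0\<close> satisfies \<open>w \<in> D\<nabla>\<phi>(x)(y)\<close>.\<close>

lemma mem_graph_of_iff [simp]: "(p, q) \<in> graph_of f \<longleftrightarrow> q = f p"
  by (auto simp: graph_of_def)

lemma tangent_cone_approachable:
  "w \<in> tangent_cone \<Omega> x \<longleftrightarrow>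
     (\<forall>e>0. \<forall>d>0. \<exists>t u. 0 < t \<and> t < d \<and> dist u w < e \<and> x + t *\<^sub>R u \<in> \<Omega>)"
proof
  assume "w \<in> tangent_cone \<Omega> x"
  then obtain t ws where t: "\<forall>k. t k > 0" "t \<longlonglongrightarrow> 0" "ws \<longlonglongrightarrow> w" "\<forall>k. x + t k *\<^sub>R ws k \<in> \<Omega>"
    unfolding tangent_cone_def by blast
  show "\<forall>e>0. \<forall>d>0. \<exists>t u. 0 < t \<and> t < d \<and> dist u w < e \<and> x + t *\<^sub>R u \<in> \<Omega>"
  proof (intro allI impI)
    fix e d :: real assume "e > 0" "d > 0"
    then have "\<forall>\<^sub>F k in sequentially. dist (t k) 0 < d \<and> dist (ws k) w < e"
      using t(2,3) by (intro eventually_conj tendstoD)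
    then obtain k where "dist (t k) 0 < d" "dist (ws k) w < e"
      using eventually_happens'[OF sequentially_bot] by blast
    then show "\<exists>t u. 0 < t \<and> t < d \<and> dist u w < e \<and> x + t *\<^sub>R u \<in> \<Omega>"
      using t(1,4) by (intro exI[of _ "t k"] exI[of _ "ws k"]) auto
  qed
next
  assume approx: "\<forall>e>0. \<forall>d>0. \<exists>t u. 0 < t \<and> t < d \<and> dist u w < e \<and> x + t *\<^sub>R u \<in> \<Omega>"
  have "\<forall>k::nat. \<exists>t u. 0 < t \<and> t < 1 / Suc k \<and> dist u w < 1 / Suc k \<and> x + t *\<^sub>R u \<in> \<Omega>"
    using approx by simp
  then obtain t u where tu: "\<And>k. 0 < t k \<and> t k < 1 / Suc k \<and> dist (u k) w < 1 / Suc k \<and> x + t k *\<^sub>R u k \<in> \<Omega>"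
    by metis
  have lim0: "(\<lambda>k. 1 / real (Suc k)) \<longlonglongrightarrow> 0"
    using LIMSEQ_inverse_real_of_nat by (simp add: inverse_eq_divide)
  have t_lim: "t \<longlonglongrightarrow> 0"
    by (rule tendsto_sandwich[OF _ _ tendsto_const lim0]) (use tu in \<open>simp_all add: less_imp_le\<close>)
  have "(\<lambda>k. dist (u k) w) \<longlonglongrightarrow> 0"
    by (rule tendsto_sandwich[OF _ _ tendsto_const lim0]) (use tu in \<open>simp_all add: less_imp_le\<close>)
  then have u_lim: "u \<longlonglongrightarrow> w"
    using tendsto_dist_iff by blast
  show "w \<in> tangent_cone \<Omega> x"
    unfolding tangent_cone_def using tu t_lim u_lim by blast
qed

lemma closed_tangent_cone: "closed (tangent_cone \<Omega> x)"
proof -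
  have "w \<in> tangent_cone \<Omega> x" if near: "\<forall>e>0. \<exists>y\<in>tangent_cone \<Omega> x. dist y w < e" for w
    unfolding tangent_cone_approachable
  proof (intro allI impI)
    fix e d :: real assume "e > 0" "d > 0"
    then obtain y where y: "y \<in> tangent_cone \<Omega> x" "dist y w < e/2"
      using near by (meson half_gt_zero)
    then obtain t u where tu: "0 < t" "t < d" "dist u y < e/2" "x + t *\<^sub>R u \<in> \<Omega>"
      using \<open>e > 0\<close> \<open>d > 0\<close> unfolding tangent_cone_approachable by (meson half_gt_zero)
    have "dist u w < e"
      using tu(3) y(2) dist_triangle_half_r[of y u e w] by (simp add: dist_commute)
    then show "\<exists>t u. 0 < t \<and> t < d \<and> dist u w < e \<and> x + t *\<^sub>R u \<in> \<Omega>"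
      using tu by blast
  qed
  then show ?thesis
    by (metis closure_approachable closure_subset_eq subsetI)
qed

lemma grad_eq_at_tilted_local_min:
  fixes \<phi> :: "'a::euclidean_space \<Rightarrow> real"
  assumes "\<phi> differentiable (at z)" and "\<forall>\<^sub>F y in at z. \<phi> z - v \<bullet> z \<le> \<phi> y - v \<bullet> y"
  shows "grad \<phi> z = v"
proof -
  have "((\<lambda>y. \<phi> y - v \<bullet> y) has_derivative (\<lambda>h. frechet_derivative \<phi> (at z) h - v \<bullet> h)) (at z)"
    using assms(1) frechet_derivative_works by (auto intro!: derivative_eq_intros)
  then have "(\<lambda>h. frechet_derivative \<phi> (at z) h - v \<bullet> h) = (\<lambda>h. 0)"
    using assms(2) by (rule has_derivative_local_min)
  then have "frechet_derivative \<phi> (at z) h = v \<bullet> h" for h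
    by (metis eq_iff_diff_eq_0)
  then show ?thesis
    unfolding grad_def using euclidean_representation[of v] by (simp add: inner_commute)
qed

lemma tilt_stable_min_imp_lipschitz_inverse_grad:
  fixes \<phi> :: "'a::euclidean_space \<Rightarrow> real"
  assumes "C11_near \<phi> xbar" and "tilt_stable_min \<phi> xbar"
  obtains N V m L where "open N" "xbar \<in> N" "open V" "L-lipschitz_on V m"
    "\<And>v. v \<in> V \<Longrightarrow> grad \<phi> (m v) = v"
    "\<And>z. z \<in> N \<Longrightarrow> grad \<phi> z \<in> V \<and> m (grad \<phi> z) = z"
proof -
  obtain U where U: "open U" "xbar \<in> U" "\<And>x. x \<in> U \<Longrightarrow> \<phi> differentiable (at x)"
    using assms(1) unfolding C11_near_def by blast
  obtain \<gamma> V m L where tilt: "\<gamma> > 0" "open V" "0 \<in> V" "\<And>v. v \<in> V \<Longrightarrow> tilt_argmin \<phi> xbar \<gamma> v = {m v}"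
    "L-lipschitz_on V m" "tilt_argmin \<phi> xbar \<gamma> 0 = {xbar}"
    using assms(2) unfolding tilt_stable_min_def by blast
  have m0: "m 0 = xbar"
    using tilt(3,4,6) by auto
  have "continuous_on V m"
    using tilt(5) lipschitz_on_continuous_on by blast
  define V' where "V' = V \<inter> m -` (ball xbar \<gamma> \<inter> U)"
  have "open V'"
    unfolding V'_def using \<open>continuous_on V m\<close> tilt(2) U(1)
    by (intro continuous_open_preimage open_Int open_ball)
  have "0 \<in> V'"
    unfolding V'_def using m0 tilt U by auto
  have grad_m: "grad \<phi> (m v) = v" if "v \<in> V'" for v
  proof -
    have min: "m v \<in> tilt_argmin \<phi> xbar \<gamma> v" and interior: "m v \<in> ball xbar \<gamma>" "m v \<in> U"
      using tilt(4) that unfolding V'_def by auto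
    have "\<forall>\<^sub>F y in at (m v). y \<in> ball xbar \<gamma>"
      using eventually_at_in_open'[OF open_ball interior(1)] .
    then have "\<forall>\<^sub>F y in at (m v). \<phi> (m v) - v \<bullet> m v \<le> \<phi> y - v \<bullet> y"
      by eventually_elim (use min in \<open>auto simp: tilt_argmin_def\<close>)
    then show ?thesis
      using grad_eq_at_tilted_local_min U(3) interior(2) by blast
  qed
  have "open (m ` V')"
  proof (rule invariance_of_domain)
    show "continuous_on V' m"
      using \<open>continuous_on V m\<close> V'_def continuous_on_subset by blast
    show "inj_on m V'"
      by (metis grad_m inj_onI)
  qed (fact \<open>open V'\<close>)
  moreover have "xbar \<in> m ` V'"
    using \<open>0 \<in> V'\<close> m0 by force
  moreover note \<open>open V'\<close>
  moreover have "L-lipschitz_on V' m"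
    using tilt(5) V'_def lipschitz_on_subset by blast
  moreover note grad_m
  moreover have "grad \<phi> z \<in> V' \<and> m (grad \<phi> z) = z" if "z \<in> m ` V'" for z
    using that grad_m by auto
  ultimately show ?thesis
    by (rule that)
qed

lemma graph_deriv_norm_le_lipschitz_inverse:
  fixes g :: "'a::real_normed_vector \<Rightarrow> 'b::real_normed_vector"
  assumes lipschitz_inverse: "L-lipschitz_on V m"
    and N: "open N" "x \<in> N" and inverse: "\<And>z. z \<in> N \<Longrightarrow> g z \<in> V \<and> m (g z) = z"
    and deriv: "w \<in> graph_deriv g x y"
  shows "norm y \<le> L * norm w"
proof -
  obtain t ps where tp: "\<forall>k. t k > 0" "t \<longlonglongrightarrow> 0" "ps \<longlonglongrightarrow> (y, w)"
    "\<forall>k. (x, g x) + t k *\<^sub>R ps k \<in> graph_of g"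
    using deriv unfolding graph_deriv_def tangent_cone_def by blast
  define a b where "a k = fst (ps k)" and "b k = snd (ps k)" for k
  have a_lim: "a \<longlonglongrightarrow> y" and b_lim: "b \<longlonglongrightarrow> w"
    unfolding a_def b_def using tendsto_fst[OF tp(3)] tendsto_snd[OF tp(3)] by simp_all
  have g_step: "g (x + t k *\<^sub>R a k) = g x + t k *\<^sub>R b k" for k
    using tp(4)[rule_format, of k] unfolding a_def b_def by (cases "ps k") simp
  have "(\<lambda>k. x + t k *\<^sub>R a k) \<longlonglongrightarrow> x"
    using tendsto_add[OF tendsto_const tendsto_scaleR[OF tp(2) a_lim], of x] by simp
  then have "\<forall>\<^sub>F k in sequentially. x + t k *\<^sub>R a k \<in> N"
    using N by (rule topological_tendstoD)
  then have "\<forall>\<^sub>F k in sequentially. norm (a k) \<le> L * norm (b k)"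
  proof eventually_elim
    case (elim k)
    have "norm (t k *\<^sub>R a k) = dist (m (g (x + t k *\<^sub>R a k))) (m (g x))"
      using N(2) inverse elim by (simp add: dist_norm)
    also have "\<dots> \<le> L * dist (g (x + t k *\<^sub>R a k)) (g x)"
      using lipschitz_inverse N(2) inverse elim unfolding lipschitz_on_def by blast
    also have "\<dots> = L * norm (t k *\<^sub>R b k)"
      using g_step[of k] by (simp add: dist_norm)
    finally have "norm (t k *\<^sub>R a k) \<le> L * norm (t k *\<^sub>R b k)" .
    then have "t k * norm (a k) \<le> t k * (L * norm (b k))"
      using tp(1)[rule_format, of k] by (simp add: abs_of_pos mult.left_commute)
    then show ?case
      using tp(1) by simp
  qed
  then show ?thesis
    by (rule tendsto_le[OF sequentially_bot tendsto_mult[OF tendsto_const tendsto_norm[OF b_lim]] tendsto_norm[OF a_lim]])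
qed

lemma graph_deriv_nonempty_lipschitz_inverse:
  fixes g :: "'a::{real_normed_vector,heine_borel} \<Rightarrow> 'b::real_normed_vector"
  assumes lipschitz_inverse: "L-lipschitz_on V m"
    and "open V" "g x \<in> V" "m (g x) = x" and inverse: "\<And>v. v \<in> V \<Longrightarrow> g (m v) = v"
  shows "\<exists>y. w \<in> graph_deriv g x y"
proof -
  obtain e where e: "e > 0" "ball (g x) e \<subseteq> V"
    using \<open>open V\<close> \<open>g x \<in> V\<close> open_contains_ball by blast
  define \<delta> where "\<delta> = e / (norm w + 1)"
  define t where "t k = \<delta> / Suc k" for k :: nat
  have "\<delta> > 0"
    unfolding \<delta>_def using e(1) by (simp add: add_nonneg_pos)
  then have t_pos: "t k > 0" for k
    unfolding t_def by simp
  have t_lim: "t \<longlonglongrightarrow> 0"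
    unfolding t_def using LIMSEQ_Suc[OF lim_const_over_n[of \<delta>]] by simp
  have step_in_V: "g x + t k *\<^sub>R w \<in> V" for k
  proof -
    have "t k * norm w \<le> \<delta> * norm w"
      unfolding t_def using \<open>\<delta> > 0\<close> by (intro mult_right_mono) (auto simp: field_simps)
    also have "\<dots> < \<delta> * (norm w + 1)"
      using \<open>\<delta> > 0\<close> by simp
    also have "\<dots> = e"
      unfolding \<delta>_def by (simp add: add_nonneg_eq_0_iff)
    finally show ?thesis
      using e(2) t_pos[of k] by (auto simp: dist_norm)
  qed
  define q where "q k = (m (g x + t k *\<^sub>R w) - x) /\<^sub>R t k" for k
  have "norm (q k) \<le> L * norm w" for k
  proof -
    have "norm (m (g x + t k *\<^sub>R w) - x) = dist (m (g x + t k *\<^sub>R w)) (m (g x))"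
      using \<open>m (g x) = x\<close> by (simp add: dist_norm)
    also have "\<dots> \<le> L * dist (g x + t k *\<^sub>R w) (g x)"
      using lipschitz_inverse step_in_V[of k] \<open>g x \<in> V\<close> unfolding lipschitz_on_def by blast
    also have "\<dots> = L * (t k * norm w)"
      using t_pos[of k] by (simp add: dist_norm)
    finally have "norm (m (g x + t k *\<^sub>R w) - x) \<le> L * (t k * norm w)" .
    then show ?thesis
      unfolding q_def using t_pos[of k] by (simp only: norm_scaleR) (simp add: field_simps)
  qed
  then have "bounded (range q)"
    unfolding bounded_iff by blast
  then obtain y r where "strict_mono r" "(q \<circ> r) \<longlonglongrightarrow> y"
    using bounded_imp_convergent_subsequence by blast
  have "(y, w) \<in> tangent_cone (graph_of g) (x, g x)"
    unfolding tangent_cone_def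
  proof (intro CollectI exI[of _ "t \<circ> r"] exI[of _ "\<lambda>k. (q (r k), w)"] conjI allI)
    show "0 < (t \<circ> r) k" for k
      using t_pos by simp
    show "(t \<circ> r) \<longlonglongrightarrow> 0"
      using LIMSEQ_subseq_LIMSEQ[OF t_lim \<open>strict_mono r\<close>] .
    show "(\<lambda>k. (q (r k), w)) \<longlonglongrightarrow> (y, w)"
      using tendsto_Pair[OF \<open>(q \<circ> r) \<longlonglongrightarrow> y\<close> tendsto_const] by (simp add: o_def)
    show "(x, g x) + (t \<circ> r) k *\<^sub>R (q (r k), w) \<in> graph_of g" for k
      unfolding q_def using t_pos[of "r k"] inverse[OF step_in_V] by simp
  qed
  then show ?thesis
    unfolding graph_deriv_def by blast
qed

lemma closed_graph_deriv_preimage: "closed {y. w \<in> graph_deriv g x y}"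
proof -
  have "{y. w \<in> graph_deriv g x y} = (\<lambda>y. (y, w)) -` tangent_cone (graph_of g) (x, g x)"
    unfolding graph_deriv_def by auto
  also have "closed \<dots>"
    by (intro continuous_closed_vimage closed_tangent_cone continuous_intros)
  finally show ?thesis .
qed

theorem proposition5p2:
  fixes \<phi> :: "'a::euclidean_space \<Rightarrow> real" and xbar :: 'a
  assumes "C11_near \<phi> xbar"
    and "tilt_stable_min \<phi> xbar"
  shows "\<exists>N. open N \<and> xbar \<in> N \<and>
           (\<forall>x\<in>N. {y. - grad \<phi> x \<in> graph_deriv (grad \<phi>) x y} \<noteq> {} \<and>
                   compact {y. - grad \<phi> x \<in> graph_deriv (grad \<phi>) x y})"
proof -
  obtain N V m L where N: "open N" "xbar \<in> N" and "open V" and lip: "L-lipschitz_on V m"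
    and inv: "\<And>v. v \<in> V \<Longrightarrow> grad \<phi> (m v) = v" "\<And>z. z \<in> N \<Longrightarrow> grad \<phi> z \<in> V \<and> m (grad \<phi> z) = z"
    by (rule tilt_stable_min_imp_lipschitz_inverse_grad[OF assms]) (rule that; assumption)
  have "{y. w \<in> graph_deriv (grad \<phi>) x y} \<noteq> {} \<and> compact {y. w \<in> graph_deriv (grad \<phi>) x y}"
    if "x \<in> N" for x w
  proof
    show "{y. w \<in> graph_deriv (grad \<phi>) x y} \<noteq> {}"
      using graph_deriv_nonempty_lipschitz_inverse[OF lip \<open>open V\<close>] inv that by blast
    have "bounded {y. w \<in> graph_deriv (grad \<phi>) x y}"
      unfolding bounded_iff using graph_deriv_norm_le_lipschitz_inverse[OF lip N(1) that inv(2)] by blast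
    then show "compact {y. w \<in> graph_deriv (grad \<phi>) x y}"
      using closed_graph_deriv_preimage compact_eq_bounded_closed by blast
  qed
  then show ?thesis
    using N by blast
qed

end
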